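(* In the setting described in the context, for every $S\in\Omega_{worm}$, $$\pi_{worm}(S)\ \ge\ \frac12\left(\frac{x_{\min}}{2}\right)^{|E_C|},$$ where $x_{\min}=\min_{e\in E_C}x_e$.
   Context: Let $\beta>1$. Let $G=(V,E)$ be a finite connected simple 4-regular graph with, at each vertex, its four incident edges labelled bijectively $x_1,\dots,x_4$. Each edge has two half-edges (one at each endpoint). Pairing at each vertex slot $x_1$ with $x_4$ and $x_2$ with $x_3$, and following edges by entering a vertex through one slot of a pair and leaving through the other, partitions $E$ into closed trails (circuits) $C_1,\dots,C_m$. For each circuit a reference half-edge $h_i$ is fixed. Consider orientations (equivalently, maps $\sigma$ from half-edges to $\{0,1\}$ with opposite values on the two half-edges of each edge) of nonzero weight for the vertex function $f^*$ with $f^*(0011)=f^*(1100)=\beta$, $f^*(0101)=f^*(1010)=1$, $f^*=0$ otherwise (evaluated at $v$ on the half-edges at $v$ in slot order $x_1,\dots,x_4$); in these, values alternate along each circuit and $\sigma(C_i):=\sigma(h_i)$. A vertex at which the pair $\{x_1,x_4\}$ lies on $C_i$ and $\{x_2,x_3\}$ on $C_j$, $i\neq j$, is an agree-vertex if its weight is $\beta$ exactly when $\sigma(C_i)=\sigma(C_j)$ (and $1$ otherwise), and a disagree-vertex if its weight is $\beta$ exactly when $\sigma(C_i)\neq\sigma(C_j)$; $A(i,j),D(i,j)$ count these. $G_C=(\mathcal{C},E_C)$, $\mathcal{C}=\{C_1,\dots,C_m\}$, has an edge $\{C_i,C_j\}$ iff $i\ne j$ and they share such a vertex. Assume the system $X_u\oplus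 X_v=\mathbf{I}(A(u,v)<D(u,v))$ for all $\{u,v\}\in E_C$ has a solution over $\mathrm{GF}(2)$, and for each circuit with $X_i=1$ replace $h_i$ by an adjacent half-edge of $C_i$ (which complements $\sigma(C_i)$ and swaps agree/disagree vertices between $C_i$ and each other circuit); with $A,D$ recomputed after this change, set $\beta_e=\beta^{A(u,v)-D(u,v)}$ and $x_e=(\beta_e-1)/(\beta_e+1)$ for $e=\{u,v\}\in E_C$. Worm measure. For $k\ge0$ let $\Omega_k$ be the set of edge sets $S\subseteq E_C$ such that exactly $k$ vertices of $G_C$ have odd degree in $(\mathcal{C},S)$; $\Omega_{worm}=\Omega_0\cup\Omega_2$. Let $w(S)=\prod_{e\in S}x_e$, $Z_k=\sum_{S\in\Omega_k}w(S)$, $\xi(S)=m$ if $S\in\Omega_0$, $\xi(S)=2$ if $S\in\Omega_2$, $\xi(S)=0$ otherwise, $w_{worm}(S)=\xi(S)w(S)$, $Z_{worm}=mZ_0+2Z_2$ and $\pi_{worm}(S)=w_{worm}(S)/Z_{worm}$. *)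

theory Defs
  imports Complex_Main
begin

text \<open>Vertices have type 'v; slots x1,x2,x3,x4 are encoded as 0,1,2,3.
  nbr v i is the neighbour of v reached through the edge in slot i.\<close>

definition adj_rel :: "'v set \<Rightarrow> ('v \<Rightarrow> nat \<Rightarrow> 'v) \<Rightarrow> ('v \<times> 'v) set" where
  "adj_rel V nbr = {(u, w). u \<in> V \<and> (\<exists>i<4. nbr u i = w)}"

definition labelled_4reg_graph :: "'v set \<Rightarrow> ('v \<Rightarrow> nat \<Rightarrow> 'v) \<Rightarrow> bool" where
  "labelled_4reg_graph V nbr \<longleftrightarrow>
     finite V \<and> V \<noteq> {} \<and>
     (\<forall>v\<in>V. \<forall>i<4. nbr v i \<in> V \<and> nbr v i \<noteq> v) \<and>
     (\<forall>v\<in>V. inj_on (nbr v) {..<4}) \<and>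
     (\<forall>v\<in>V. \<forall>i<4. \<exists>j<4. nbr (nbr v i) j = v) \<and>
     (\<forall>u\<in>V. \<forall>w\<in>V. (u, w) \<in> (adj_rel V nbr)\<^sup>*)"

definition half_edges :: "'v set \<Rightarrow> ('v \<times> nat) set" where
  "half_edges V = V \<times> {..<4}"

definition back_slot :: "('v \<Rightarrow> nat \<Rightarrow> 'v) \<Rightarrow> 'v \<Rightarrow> nat \<Rightarrow> nat" where
  "back_slot nbr v i = (THE j. j < 4 \<and> nbr (nbr v i) j = v)"

definition opp :: "('v \<Rightarrow> nat \<Rightarrow> 'v) \<Rightarrow> 'v \<times> nat \<Rightarrow> 'v \<times> nat" where
  "opp nbr h = (nbr (fst h) (snd h), back_slot nbr (fst h) (snd h))"

text \<open>Pairing x1 with x4 and x2 with x3 (slots 0<->3, 1<->2).\<close>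
definition partner :: "'v \<times> nat \<Rightarrow> 'v \<times> nat" where
  "partner h = (fst h, 3 - snd h)"

definition circ_rel :: "'v set \<Rightarrow> ('v \<Rightarrow> nat \<Rightarrow> 'v) \<Rightarrow> (('v \<times> nat) \<times> ('v \<times> nat)) set" where
  "circ_rel V nbr = {(h, opp nbr h) | h. h \<in> half_edges V} \<union> {(h, partner h) | h. h \<in> half_edges V}"

text \<open>Circuits, each represented as the set of its half-edges.\<close>
definition circuits :: "'v set \<Rightarrow> ('v \<Rightarrow> nat \<Rightarrow> 'v) \<Rightarrow> ('v \<times> nat) set set" where
  "circuits V nbr = half_edges V // ((circ_rel V nbr \<union> (circ_rel V nbr)\<inverse>)\<^sup>*)"

text \<open>Vertex function f*, with True encoding 1 and False encoding 0.\<close>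
definition fstar :: "real \<Rightarrow> bool \<Rightarrow> bool \<Rightarrow> bool \<Rightarrow> bool \<Rightarrow> real" where
  "fstar \<beta> a b c d =
    (if (a, b, c, d) = (False, False, True, True) \<or> (a, b, c, d) = (True, True, False, False) then \<beta>
     else if (a, b, c, d) = (False, True, False, True) \<or> (a, b, c, d) = (True, False, True, False) then 1
     else 0)"

definition vweight :: "real \<Rightarrow> ('v \<times> nat \<Rightarrow> bool) \<Rightarrow> 'v \<Rightarrow> real" where
  "vweight \<beta> \<sigma> v = fstar \<beta> (\<sigma> (v, 0)) (\<sigma> (v, 1)) (\<sigma> (v, 2)) (\<sigma> (v, 3))"

text \<open>Orientations (opposite values on the two half-edges of each edge) of nonzero weight.\<close>
definition valid_orient :: "'v set \<Rightarrow> ('v \<Rightarrow> nat \<Rightarrow> 'v) \<Rightarrow> real \<Rightarrow> ('v \<times> nat \<Rightarrow> bool) \<Rightarrow> bool" where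
  "valid_orient V nbr \<beta> \<sigma> \<longleftrightarrow>
     (\<forall>h\<in>half_edges V. \<sigma> (opp nbr h) \<noteq> \<sigma> h) \<and> (\<forall>v\<in>V. vweight \<beta> \<sigma> v \<noteq> 0)"

definition crossing :: "'v \<Rightarrow> ('v \<times> nat) set \<Rightarrow> ('v \<times> nat) set \<Rightarrow> bool" where
  "crossing v C C' \<longleftrightarrow> (v, 0) \<in> C \<and> (v, 3) \<in> C \<and> (v, 1) \<in> C' \<and> (v, 2) \<in> C'"

text \<open>Number of agree / disagree vertices between the two circuits of the edge e of G_C,
  w.r.t. the reference half-edge choice h (sigma(C) = sigma(h C)).\<close>
definition agree_cnt ::
  "'v set \<Rightarrow> ('v \<Rightarrow> nat \<Rightarrow> 'v) \<Rightarrow> real \<Rightarrow> (('v \<times> nat) set \<Rightarrow> 'v \<times> nat) \<Rightarrow> ('v \<times> nat) set set \<Rightarrow> nat" where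
  "agree_cnt V nbr \<beta> h e = card {v \<in> V. \<exists>C\<in>e. \<exists>C'\<in>e. C \<noteq> C' \<and> crossing v C C' \<and>
      (\<forall>\<sigma>. valid_orient V nbr \<beta> \<sigma> \<longrightarrow> (vweight \<beta> \<sigma> v = \<beta> \<longleftrightarrow> \<sigma> (h C) = \<sigma> (h C')))}"

definition disagree_cnt ::
  "'v set \<Rightarrow> ('v \<Rightarrow> nat \<Rightarrow> 'v) \<Rightarrow> real \<Rightarrow> (('v \<times> nat) set \<Rightarrow> 'v \<times> nat) \<Rightarrow> ('v \<times> nat) set set \<Rightarrow> nat" where
  "disagree_cnt V nbr \<beta> h e = card {v \<in> V. \<exists>C\<in>e. \<exists>C'\<in>e. C \<noteq> C' \<and> crossing v C C' \<and>
      (\<forall>\<sigma>. valid_orient V nbr \<beta> \<sigma> \<longrightarrow> (vweight \<beta> \<sigma> v = \<beta> \<longleftrightarrow> \<sigma> (h C) \<noteq> \<sigma> (h C')))}"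

definition circuit_edges :: "'v set \<Rightarrow> ('v \<Rightarrow> nat \<Rightarrow> 'v) \<Rightarrow> ('v \<times> nat) set set set" where
  "circuit_edges V nbr = {{C, C'} | C C'. C \<in> circuits V nbr \<and> C' \<in> circuits V nbr \<and> C \<noteq> C' \<and>
      (\<exists>v\<in>V. crossing v C C')}"

definition edge_x ::
  "'v set \<Rightarrow> ('v \<Rightarrow> nat \<Rightarrow> 'v) \<Rightarrow> real \<Rightarrow> (('v \<times> nat) set \<Rightarrow> 'v \<times> nat) \<Rightarrow> ('v \<times> nat) set set \<Rightarrow> real" where
  "edge_x V nbr \<beta> h e =
     (let b = \<beta> powr (real (agree_cnt V nbr \<beta> h e) - real (disagree_cnt V nbr \<beta> h e)) in (b - 1) / (b + 1))"

text \<open>Worm measure on a graph with vertex set N and edge set E (edges are 2-sets), weights x.\<close>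
definition odd_deg_count :: "'c set \<Rightarrow> 'c set set \<Rightarrow> nat" where
  "odd_deg_count N S = card {c \<in> N. odd (card {e \<in> S. c \<in> e})}"

definition Omega :: "'c set \<Rightarrow> 'c set set \<Rightarrow> nat \<Rightarrow> 'c set set set" where
  "Omega N E k = {S. S \<subseteq> E \<and> odd_deg_count N S = k}"

definition Omega_worm :: "'c set \<Rightarrow> 'c set set \<Rightarrow> 'c set set set" where
  "Omega_worm N E = Omega N E 0 \<union> Omega N E 2"

definition wS :: "('c set \<Rightarrow> real) \<Rightarrow> 'c set set \<Rightarrow> real" where
  "wS x S = (\<Prod>e\<in>S. x e)"

definition Zk :: "'c set \<Rightarrow> 'c set set \<Rightarrow> ('c set \<Rightarrow> real) \<Rightarrow> nat \<Rightarrow> real" where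
  "Zk N E x k = (\<Sum>S\<in>Omega N E k. wS x S)"

definition xi :: "'c set \<Rightarrow> 'c set set \<Rightarrow> 'c set set \<Rightarrow> real" where
  "xi N E S = (if S \<in> Omega N E 0 then real (card N) else if S \<in> Omega N E 2 then 2 else 0)"

definition Z_worm :: "'c set \<Rightarrow> 'c set set \<Rightarrow> ('c set \<Rightarrow> real) \<Rightarrow> real" where
  "Z_worm N E x = real (card N) * Zk N E x 0 + 2 * Zk N E x 2"

definition pi_worm :: "'c set \<Rightarrow> 'c set set \<Rightarrow> ('c set \<Rightarrow> real) \<Rightarrow> 'c set set \<Rightarrow> real" where
  "pi_worm N E x S = xi N E S * wS x S / Z_worm N E x"

end

theory Submission
  imports Defs
begin

(* After the flip every edge e of the circuit graph has A(e) \<ge> D(e): if both endpoints are flipped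
  alike nothing changes, and if exactly one is flipped the agree and disagree vertices of e swap,
  which the GF(2) system prescribes exactly when A(e) < D(e).  Hence \<beta>_e \<ge> 1 and 0 \<le> x_e \<le> 1,
  so w(S) \<ge> x_min^|E_C| and Z_k \<le> |\<Omega>_k|.
  The circuit graph is connected because G is, so taking the symmetric difference with a fixed path
  from a root circuit r to u maps \<Omega>_0 \<times> (circuits - {r}) injectively into \<Omega>_2.  Hence
  (m - 1)|\<Omega>_0| \<le> |\<Omega>_2|, which together with |\<Omega>_0| + |\<Omega>_2| \<le> 2^|E_C| gives
  Z_worm \<le> m|\<Omega>_0| + 2|\<Omega>_2| \<le> \<xi>(S) 2^(|E_C|+1). *)

definition odd_vertices :: "'c set \<Rightarrow> 'c set set \<Rightarrow> 'c set" where
  "odd_vertices N T = {c \<in> N. odd (card {e \<in> T. c \<in> e})}"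

definition simple_edges :: "'c set \<Rightarrow> 'c set set \<Rightarrow> bool" where
  "simple_edges N E \<longleftrightarrow> (\<forall>e\<in>E. \<exists>a b. e = {a, b} \<and> a \<in> N \<and> b \<in> N \<and> a \<noteq> b)"

definition edge_rel :: "'c set set \<Rightarrow> ('c \<times> 'c) set" where
  "edge_rel E = {(a, b). {a, b} \<in> E}"

lemma sym_edge_rel: "sym (edge_rel E)"
  unfolding edge_rel_def sym_def by (auto simp: insert_commute)

lemma finite_edges: "simple_edges N E \<Longrightarrow> finite N \<Longrightarrow> finite E"
  unfolding simple_edges_def by (rule finite_subset[of E "Pow N"]) auto

lemma odd_card_sym_diff:
  assumes "finite A" "finite B"
  shows "odd (card (sym_diff A B)) \<longleftrightarrow> odd (card A) \<noteq> odd (card B)"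
proof -
  have "sym_diff A B = (A \<union> B) - (A \<inter> B)" by blast
  also have "card \<dots> = card (A \<union> B) - card (A \<inter> B)"
    by (rule card_Diff_subset) (use assms in auto)
  finally have "card (sym_diff A B) = card (A \<union> B) - card (A \<inter> B)" .
  moreover have "card (A \<inter> B) \<le> card (A \<union> B)" by (rule card_mono) (use assms in auto)
  ultimately have "card (sym_diff A B) + 2 * card (A \<inter> B) = card A + card B"
    using card_Un_Int[OF assms] by linarith
  then show ?thesis by presburger
qed

lemma odd_vertices_sym_diff:
  assumes "finite A" "finite B"
  shows "odd_vertices N (sym_diff A B) = sym_diff (odd_vertices N A) (odd_vertices N B)"
proof -
  have "odd (card {e \<in> sym_diff A B. c \<in> e}) \<longleftrightarrow>
      odd (card {e \<in> A. c \<in> e}) \<noteq> odd (card {e \<in> B. c \<in> e})" for c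
  proof -
    have "{e \<in> sym_diff A B. c \<in> e} = sym_diff {e \<in> A. c \<in> e} {e \<in> B. c \<in> e}" by blast
    then show ?thesis using odd_card_sym_diff[of "{e \<in> A. c \<in> e}" "{e \<in> B. c \<in> e}"] assms by simp
  qed
  then show ?thesis unfolding odd_vertices_def by blast
qed

lemma odd_vertices_edge:
  assumes "a \<in> N" "b \<in> N" "a \<noteq> b"
  shows "odd_vertices N {{a, b}} = {a, b}"
proof -
  have "{e \<in> {{a, b}}. c \<in> e} = (if c \<in> {a, b} then {{a, b}} else {})" for c by auto
  then show ?thesis using assms unfolding odd_vertices_def by auto
qed

lemma odd_vertices_path:
  assumes E: "simple_edges N E" "finite E" and path: "(r, c) \<in> (edge_rel E)\<^sup>*"
  shows "\<exists>P\<subseteq>E. odd_vertices N P = sym_diff {r} {c}"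
  using path
proof (induction rule: rtrancl_induct)
  case base
  have "odd_vertices N {} = {}" by (simp add: odd_vertices_def)
  then show ?case by blast
next
  case (step b c)
  then obtain P where P: "P \<subseteq> E" "odd_vertices N P = sym_diff {r} {b}" by blast
  have bc: "{b, c} \<in> E" using step.hyps(2) by (simp add: edge_rel_def)
  then obtain a a' where "{b, c} = {a, a'}" "a \<in> N" "a' \<in> N" "a \<noteq> a'"
    using E(1) unfolding simple_edges_def by blast
  then have "b \<in> N" "c \<in> N" "b \<noteq> c" by (auto simp: doubleton_eq_iff)
  then have "odd_vertices N (sym_diff P {{b, c}}) = sym_diff (sym_diff {r} {b}) {b, c}"
    using odd_vertices_sym_diff[OF finite_subset[OF P(1) E(2)], of "{{b, c}}" N]
      odd_vertices_edge[of b N c] P(2) by simp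
  also have "\<dots> = sym_diff {r} {c}" using \<open>b \<noteq> c\<close> by blast
  finally have "odd_vertices N (sym_diff P {{b, c}}) = sym_diff {r} {c}" .
  moreover have "sym_diff P {{b, c}} \<subseteq> E" using P(1) bc by blast
  ultimately show ?case by blast
qed

lemma Omega_iff: "T \<in> Omega N E k \<longleftrightarrow> T \<subseteq> E \<and> card (odd_vertices N T) = k"
  by (simp add: Omega_def odd_deg_count_def odd_vertices_def)

lemma finite_Omega: "finite E \<Longrightarrow> finite (Omega N E k)"
  unfolding Omega_def by (rule finite_subset[of _ "Pow E"]) auto

lemma Omega_0_iff: "finite N \<Longrightarrow> T \<in> Omega N E 0 \<longleftrightarrow> T \<subseteq> E \<and> odd_vertices N T = {}"
  by (simp add: Omega_iff odd_vertices_def)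

lemma card_Omega_0_le_card_Omega_2:
  assumes E: "simple_edges N E" and N: "finite N" and r: "r \<in> N"
    and conn: "\<forall>c\<in>N. (r, c) \<in> (edge_rel E)\<^sup>*"
  shows "(card N - 1) * card (Omega N E 0) \<le> card (Omega N E 2)"
proof -
  have fE: "finite E" using finite_edges[OF E N] .
  obtain P where P: "\<And>u. u \<in> N \<Longrightarrow> P u \<subseteq> E \<and> odd_vertices N (P u) = sym_diff {r} {u}"
    using odd_vertices_path[OF E fE] conn by metis
  define A where "A = Omega N E 0 \<times> (N - {r})"
  define f where "f = (\<lambda>p. sym_diff (fst p) (P (snd p)))"
  have f: "f p \<subseteq> E \<and> odd_vertices N (f p) = {r, snd p}" if "p \<in> A" for p
  proof -
    have T: "fst p \<subseteq> E" "odd_vertices N (fst p) = {}"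
      using that Omega_0_iff[OF N] by (auto simp: A_def mem_Times_iff)
    have u: "snd p \<in> N" "snd p \<noteq> r" using that by (auto simp: A_def mem_Times_iff)
    have "finite (fst p)" "finite (P (snd p))" using T(1) P[OF u(1)] fE finite_subset by auto
    then show ?thesis
      using odd_vertices_sym_diff[of "fst p" "P (snd p)" N] T P[OF u(1)] u unfolding f_def by auto
  qed
  have inj: "inj_on f A"
  proof (rule inj_onI)
    fix p q assume p: "p \<in> A" and q: "q \<in> A" and eq: "f p = f q"
    have "{r, snd p} = {r, snd q}" using f[OF p] f[OF q] eq by simp
    then have snd: "snd p = snd q" using p by (auto simp: A_def mem_Times_iff doubleton_eq_iff)
    then have "sym_diff (fst p) (P (snd p)) = sym_diff (fst q) (P (snd p))"
      using eq by (simp add: f_def)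
    then have "fst p = fst q" by blast
    with snd show "p = q" by (simp add: prod_eq_iff)
  qed
  have "f p \<in> Omega N E 2" if "p \<in> A" for p
  proof -
    have "snd p \<noteq> r" using that by (simp add: A_def mem_Times_iff)
    then show ?thesis using f[OF that] by (simp add: Omega_iff)
  qed
  then have "f ` A \<subseteq> Omega N E 2" by (rule image_subsetI)
  with inj have "card A \<le> card (Omega N E 2)"
    by (rule card_inj_on_le[OF _ _ finite_Omega[OF fE]])
  then show ?thesis using r N by (simp add: A_def card_cartesian_product mult.commute)
qed

lemma card_Omega_0_add_card_Omega_2:
  assumes "finite E"
  shows "card (Omega N E 0) + card (Omega N E 2) \<le> 2 ^ card E"
proof -
  have "card (Omega N E 0) + card (Omega N E 2) = card (Omega N E 0 \<union> Omega N E 2)"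
    by (rule card_Un_disjoint[symmetric]) (auto simp: finite_Omega assms Omega_iff)
  also have "\<dots> \<le> card (Pow E)"
    by (rule card_mono) (auto simp: assms Omega_iff)
  finally show ?thesis by (simp add: card_Pow assms)
qed

lemma wS_bounds:
  assumes "\<forall>e\<in>E. 0 \<le> x e \<and> x e \<le> 1" "T \<subseteq> E"
  shows "0 \<le> wS x T \<and> wS x T \<le> 1"
  using assms unfolding wS_def by (auto intro!: prod_nonneg prod_le_1)

lemma Zk_bounds:
  assumes "\<forall>e\<in>E. 0 \<le> x e \<and> x e \<le> 1"
  shows "0 \<le> Zk N E x k \<and> Zk N E x k \<le> card (Omega N E k)"
proof -
  have "Zk N E x k \<le> (\<Sum>T\<in>Omega N E k. 1)" unfolding Zk_def
    by (rule sum_mono) (use wS_bounds[OF assms] in \<open>auto simp: Omega_iff\<close>)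
  moreover have "0 \<le> Zk N E x k" unfolding Zk_def
    by (rule sum_nonneg) (use wS_bounds[OF assms] in \<open>auto simp: Omega_iff\<close>)
  ultimately show ?thesis by simp
qed

lemma Zk_0_ge_1:
  assumes "finite E" "\<forall>e\<in>E. 0 \<le> x e \<and> x e \<le> 1"
  shows "1 \<le> Zk N E x 0"
proof -
  have "{} \<in> Omega N E 0" by (simp add: Omega_iff odd_vertices_def)
  then have "wS x {} \<le> Zk N E x 0" unfolding Zk_def
    by (rule member_le_sum) (use wS_bounds[OF assms(2)] finite_Omega[OF assms(1)] in \<open>auto simp: Omega_iff\<close>)
  then show ?thesis by (simp add: wS_def)
qed

lemma Z_worm_pos:
  assumes "finite N" "N \<noteq> {}" "finite E" "\<forall>e\<in>E. 0 \<le> x e \<and> x e \<le> 1"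
  shows "0 < Z_worm N E x"
proof -
  have "1 \<le> real (card N)" using card_gt_0_iff[of N] assms(1,2) by auto
  then have "1 \<le> real (card N) * Zk N E x 0"
    using Zk_0_ge_1[OF assms(3,4)] mult_mono[of 1 "real (card N)" 1 "Zk N E x 0"] by simp
  then show ?thesis using Zk_bounds[OF assms(4), of N 2] unfolding Z_worm_def by linarith
qed

lemma wS_ge_Min_power:
  assumes "finite E" "S \<subseteq> E" "\<forall>e\<in>E. 0 \<le> x e \<and> x e \<le> 1"
  shows "Min (x ` E) ^ card E \<le> wS x S"
proof (cases "E = {}")
  case True
  then show ?thesis using assms(2) by (simp add: wS_def)
next
  case False
  then obtain e where "e \<in> E" by blast
  then have "Min (x ` E) \<le> x e" using assms(1) by (intro Min_le) auto
  moreover have "x e \<le> 1" using \<open>e \<in> E\<close> assms(3) by blast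
  moreover have "0 \<le> Min (x ` E)" using False assms(1,3) by simp
  ultimately have xm: "0 \<le> Min (x ` E)" "Min (x ` E) \<le> 1" by linarith+
  have "Min (x ` E) ^ card E \<le> Min (x ` E) ^ card S"
    by (rule power_decreasing) (use xm card_mono[OF assms(1,2)] in auto)
  also have "\<dots> \<le> wS x S" unfolding wS_def
    using prod_mono[of S "\<lambda>_. Min (x ` E)" x] xm assms by (auto intro: Min_le)
  finally show ?thesis .
qed

lemma Z_worm_le_xi:
  assumes E: "simple_edges N E" and N: "finite N" and r: "r \<in> N"
    and conn: "\<forall>c\<in>N. (r, c) \<in> (edge_rel E)\<^sup>*"
    and x: "\<forall>e\<in>E. 0 \<le> x e \<and> x e \<le> 1"
    and S: "S \<in> Omega_worm N E"
  shows "Z_worm N E x \<le> xi N E S * 2 ^ Suc (card E)"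
proof -
  have fE: "finite E" using finite_edges[OF E N] .
  define m c0 c2 where "m = real (card N)"
    and "c0 = real (card (Omega N E 0))" and "c2 = real (card (Omega N E 2))"
  have m: "1 \<le> m" using card_gt_0_iff[of N] r N by (auto simp: m_def)
  have c0c2: "c0 + c2 \<le> 2 ^ card E"
    using card_Omega_0_add_card_Omega_2[OF fE, of N] unfolding c0_def c2_def
    by (metis of_nat_add of_nat_le_iff of_nat_numeral of_nat_power)
  have mc0: "m * c0 \<le> c0 + c2"
  proof -
    have "card N * card (Omega N E 0) \<le> card (Omega N E 0) + card (Omega N E 2)"
      using card_Omega_0_le_card_Omega_2[OF E N r conn] r N
      by (simp add: diff_mult_distrib card_gt_0_iff)
    then show ?thesis unfolding m_def c0_def c2_def by (metis of_nat_add of_nat_le_iff of_nat_mult)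
  qed
  have Zk_le: "Zk N E x 0 \<le> c0" "Zk N E x 2 \<le> c2"
    using Zk_bounds[OF x] unfolding c0_def c2_def by blast+
  have "m * Zk N E x 0 \<le> m * c0" using Zk_le(1) m by (intro mult_left_mono) auto
  moreover have "Z_worm N E x = m * Zk N E x 0 + 2 * Zk N E x 2" by (simp add: Z_worm_def m_def)
  ultimately have "Z_worm N E x \<le> m * c0 + 2 * c2" using Zk_le(2) by linarith
  moreover have "m * c0 + 2 * c2 \<le> xi N E S * 2 ^ Suc (card E)"
  proof (cases "S \<in> Omega N E 0")
    case True
    have "0 \<le> m * c0" "c2 \<le> m * c2"
      using m mult_right_mono[OF m, of c2] by (simp_all add: c0_def c2_def)
    then have "m * c0 + 2 * c2 \<le> 2 * m * (c0 + c2)" by (simp add: algebra_simps)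
    also have "\<dots> \<le> 2 * m * 2 ^ card E" using c0c2 m by simp
    finally show ?thesis using True by (simp add: xi_def m_def)
  next
    case False
    then have "xi N E S = 2" using S by (simp add: xi_def Omega_worm_def)
    then show ?thesis using c0c2 mc0 by (simp add: c0_def c2_def)
  qed
  ultimately show ?thesis by linarith
qed

lemma pi_worm_lower_bound:
  assumes E: "simple_edges N E" and N: "finite N" and r: "r \<in> N"
    and conn: "\<forall>c\<in>N. (r, c) \<in> (edge_rel E)\<^sup>*"
    and x: "\<forall>e\<in>E. 0 \<le> x e \<and> x e \<le> 1"
    and S: "S \<in> Omega_worm N E"
  shows "1/2 * (Min (x ` E) / 2) ^ card E \<le> pi_worm N E x S"
proof -
  have fE: "finite E" using finite_edges[OF E N] .
  have SE: "S \<subseteq> E" using S by (auto simp: Omega_worm_def Omega_iff)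
  have xi: "0 < xi N E S" using S r N by (auto simp: xi_def Omega_worm_def card_gt_0_iff)
  have Z: "0 < Z_worm N E x" using Z_worm_pos[OF N _ fE x] r by blast
  have "1/2 * (Min (x ` E) / 2) ^ card E = Min (x ` E) ^ card E / 2 ^ Suc (card E)"
    by (simp add: power_divide)
  also have "\<dots> \<le> wS x S / 2 ^ Suc (card E)"
    using wS_ge_Min_power[OF fE SE x] by (simp add: divide_right_mono)
  also have "\<dots> = xi N E S * wS x S / (xi N E S * 2 ^ Suc (card E))"
    using xi by simp
  also have "\<dots> \<le> xi N E S * wS x S / Z_worm N E x"
    using Z_worm_le_xi[OF E N r conn x S] Z xi wS_bounds[OF x SE]
    by (intro divide_left_mono) auto
  finally show ?thesis by (simp add: pi_worm_def)
qed

lemma simple_edges_circuit_edges: "simple_edges (circuits V nbr) (circuit_edges V nbr)"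
  unfolding simple_edges_def circuit_edges_def by blast

lemma fstar_nonzero: "fstar \<beta> a b c d \<noteq> 0 \<Longrightarrow> a \<noteq> d \<and> b \<noteq> c"
  unfolding fstar_def by (cases a; cases b; cases c; cases d) auto

lemma valid_orient_partner:
  assumes "valid_orient V nbr \<beta> \<sigma>" "k \<in> half_edges V"
  shows "\<sigma> (partner k) \<noteq> \<sigma> k"
proof -
  obtain v i where k: "k = (v, i)" "v \<in> V" "i < 4" using assms(2) by (auto simp: half_edges_def)
  have "vweight \<beta> \<sigma> v \<noteq> 0" using assms(1) k(2) by (simp add: valid_orient_def)
  then have "\<sigma> (v, 0) \<noteq> \<sigma> (v, 3)" "\<sigma> (v, 1) \<noteq> \<sigma> (v, 2)"
    using fstar_nonzero unfolding vweight_def by blast+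
  moreover have "i = 0 \<or> i = 1 \<or> i = 2 \<or> i = 3" using k(3) by arith
  ultimately show ?thesis using k(1) by (auto simp: partner_def)
qed

lemma edge_x_bounds:
  assumes "1 \<le> \<beta>" "disagree_cnt V nbr \<beta> h e \<le> agree_cnt V nbr \<beta> h e"
  shows "0 \<le> edge_x V nbr \<beta> h e \<and> edge_x V nbr \<beta> h e \<le> 1"
proof -
  define b where "b = \<beta> powr (real (agree_cnt V nbr \<beta> h e) - real (disagree_cnt V nbr \<beta> h e))"
  have "1 \<le> b" unfolding b_def by (rule ge_one_powr_ge_zero) (use assms in auto)
  then show ?thesis by (simp add: edge_x_def b_def[symmetric] Let_def)
qed

locale labelled_graph =
  fixes V :: "'v set" and nbr :: "'v \<Rightarrow> nat \<Rightarrow> 'v"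
  assumes graph: "labelled_4reg_graph V nbr"
begin

definition circuit_of :: "'v \<times> nat \<Rightarrow> ('v \<times> nat) set" where
  "circuit_of k = (circ_rel V nbr \<union> (circ_rel V nbr)\<inverse>)\<^sup>* `` {k}"

lemma back_slot:
  assumes "v \<in> V" "i < 4"
  shows "back_slot nbr v i < 4 \<and> nbr (nbr v i) (back_slot nbr v i) = v"
proof -
  have "nbr v i \<in> V" using graph assms unfolding labelled_4reg_graph_def by blast
  then have inj: "inj_on (nbr (nbr v i)) {..<4}" using graph unfolding labelled_4reg_graph_def by blast
  obtain j where j: "j < 4" "nbr (nbr v i) j = v"
    using graph assms unfolding labelled_4reg_graph_def by blast
  have "back_slot nbr v i = j" unfolding back_slot_def
  proof (rule the_equality)
    fix j' assume "j' < 4 \<and> nbr (nbr v i) j' = v"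
    with j inj show "j' = j" by (metis inj_onD lessThan_iff)
  qed (use j in simp)
  with j show ?thesis by simp
qed

lemma opp_in_half_edges: "k \<in> half_edges V \<Longrightarrow> opp nbr k \<in> half_edges V"
  using back_slot graph unfolding labelled_4reg_graph_def half_edges_def opp_def by fastforce

lemma partner_in_half_edges: "k \<in> half_edges V \<Longrightarrow> partner k \<in> half_edges V"
  unfolding partner_def half_edges_def by auto

lemma circuits_eq: "circuits V nbr = circuit_of ` half_edges V"
  unfolding circuits_def quotient_def circuit_of_def by auto

lemma circuit_subset_half_edges:
  assumes "C \<in> circuits V nbr"
  shows "C \<subseteq> half_edges V"
proof -
  have "(circ_rel V nbr \<union> (circ_rel V nbr)\<inverse>) `` half_edges V \<subseteq> half_edges V"
    using opp_in_half_edges partner_in_half_edges unfolding circ_rel_def by blast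
  then have "(circ_rel V nbr \<union> (circ_rel V nbr)\<inverse>)\<^sup>* `` half_edges V = half_edges V"
    by (rule Image_closed_trancl)
  then show ?thesis using assms unfolding circuits_eq circuit_of_def by blast
qed

lemma finite_circuits: "finite (circuits V nbr)"
  using graph unfolding circuits_eq labelled_4reg_graph_def half_edges_def by simp

lemma mem_circuit_of: "k \<in> circuit_of k"
  unfolding circuit_of_def by blast

lemma circuit_of_eq:
  assumes "(k, k') \<in> circ_rel V nbr"
  shows "circuit_of k' = circuit_of k"
proof -
  let ?R = "circ_rel V nbr \<union> (circ_rel V nbr)\<inverse>"
  have "(k, k') \<in> ?R\<^sup>*" "(k', k) \<in> ?R\<^sup>*" using assms by auto
  then show ?thesis unfolding circuit_of_def by (auto intro: rtrancl_trans)
qed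

lemma circuit_of_opp: "k \<in> half_edges V \<Longrightarrow> circuit_of (opp nbr k) = circuit_of k"
  by (rule circuit_of_eq) (unfold circ_rel_def, blast)

lemma circuit_of_partner: "k \<in> half_edges V \<Longrightarrow> circuit_of (partner k) = circuit_of k"
  by (rule circuit_of_eq) (unfold circ_rel_def, blast)

lemma circuits_at_vertex_connected:
  assumes v: "v \<in> V" and i: "i < 4"
  shows "(circuit_of (v, 0), circuit_of (v, i)) \<in> (edge_rel (circuit_edges V nbr))\<^sup>*"
proof -
  have hv: "(v, j) \<in> half_edges V" if "j < 4" for j using v that by (simp add: half_edges_def)
  have c03: "circuit_of (v, 3) = circuit_of (v, 0)"
    using circuit_of_partner[OF hv[of 0]] by (simp add: partner_def)
  have c12: "circuit_of (v, 2) = circuit_of (v, 1)"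
    using circuit_of_partner[OF hv[of 1]] by (simp add: partner_def)
  have c01: "(circuit_of (v, 0), circuit_of (v, 1)) \<in> (edge_rel (circuit_edges V nbr))\<^sup>*"
  proof (cases "circuit_of (v, 0) = circuit_of (v, 1)")
    case False
    have "crossing v (circuit_of (v, 0)) (circuit_of (v, 1))"
      unfolding crossing_def by (metis mem_circuit_of c03 c12)
    moreover have "circuit_of (v, 0) \<in> circuits V nbr" "circuit_of (v, 1) \<in> circuits V nbr"
      using hv unfolding circuits_eq by auto
    ultimately have "{circuit_of (v, 0), circuit_of (v, 1)} \<in> circuit_edges V nbr"
      unfolding circuit_edges_def using False v by blast
    then show ?thesis by (auto simp: edge_rel_def)
  qed simp
  have "i = 0 \<or> i = 1 \<or> i = 2 \<or> i = 3" using i by arith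
  then show ?thesis using c01 c03 c12 by auto
qed

lemma adjacent_vertices_connected:
  assumes "(u, w) \<in> adj_rel V nbr"
  shows "(circuit_of (u, 0), circuit_of (w, 0)) \<in> (edge_rel (circuit_edges V nbr))\<^sup>*"
proof -
  obtain i where u: "u \<in> V" "i < 4" "nbr u i = w" using assms by (auto simp: adj_rel_def)
  define j where "j = back_slot nbr u i"
  have "w \<in> V" using graph u unfolding labelled_4reg_graph_def by blast
  moreover have j: "j < 4" using back_slot[OF u(1,2)] by (simp add: j_def)
  moreover have "circuit_of (w, j) = circuit_of (u, i)"
    using circuit_of_opp[of "(u, i)"] u by (simp add: opp_def j_def half_edges_def)
  ultimately have "(circuit_of (w, 0), circuit_of (u, i)) \<in> (edge_rel (circuit_edges V nbr))\<^sup>*"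
    using circuits_at_vertex_connected by metis
  then have "(circuit_of (u, i), circuit_of (w, 0)) \<in> (edge_rel (circuit_edges V nbr))\<^sup>*"
    by (rule symD[OF sym_rtrancl[OF sym_edge_rel]])
  with circuits_at_vertex_connected[OF u(1,2)] show ?thesis by (rule rtrancl_trans)
qed

lemma circuit_graph_connected:
  assumes v: "v \<in> V" and C: "C \<in> circuits V nbr"
  shows "(circuit_of (v, 0), C) \<in> (edge_rel (circuit_edges V nbr))\<^sup>*"
proof -
  obtain u i where C: "C = circuit_of (u, i)" "u \<in> V" "i < 4"
    using C unfolding circuits_eq half_edges_def by auto
  have "(v, u) \<in> (adj_rel V nbr)\<^sup>*" using graph v C(2) unfolding labelled_4reg_graph_def by blast
  then have "(circuit_of (v, 0), circuit_of (u, 0)) \<in> (edge_rel (circuit_edges V nbr))\<^sup>*"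
    by induction (auto intro: rtrancl_trans adjacent_vertices_connected)
  then show ?thesis
    unfolding C(1) using circuits_at_vertex_connected[OF C(2,3)] by (rule rtrancl_trans)
qed

lemma flipped_reference:
  assumes ref: "\<forall>C\<in>circuits V nbr. h C \<in> C"
    and flip: "\<forall>C\<in>circuits V nbr. (\<not> X C \<longrightarrow> h' C = h C) \<and>
                 (X C \<longrightarrow> h' C = opp nbr (h C) \<or> h' C = partner (h C))"
    and C: "C \<in> circuits V nbr" and \<sigma>: "valid_orient V nbr \<beta> \<sigma>"
  shows "\<sigma> (h' C) = (\<sigma> (h C) \<noteq> X C)"
proof -
  have hC: "h C \<in> half_edges V" using ref C circuit_subset_half_edges by blast
  then have "\<sigma> (opp nbr (h C)) \<noteq> \<sigma> (h C)" using \<sigma> by (simp add: valid_orient_def)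
  moreover have "\<sigma> (partner (h C)) \<noteq> \<sigma> (h C)" using valid_orient_partner[OF \<sigma> hC] .
  ultimately show ?thesis using flip C by (cases "X C") auto
qed

definition crossing_vertices ::
  "real \<Rightarrow> (('v \<times> nat) set \<Rightarrow> 'v \<times> nat) \<Rightarrow> ('v \<times> nat) set set \<Rightarrow> (bool \<Rightarrow> bool \<Rightarrow> bool) \<Rightarrow> 'v set"
  where "crossing_vertices \<beta> h e rel = {v \<in> V. \<exists>C\<in>e. \<exists>C'\<in>e. C \<noteq> C' \<and> crossing v C C' \<and>
      (\<forall>\<sigma>. valid_orient V nbr \<beta> \<sigma> \<longrightarrow> (vweight \<beta> \<sigma> v = \<beta> \<longleftrightarrow> rel (\<sigma> (h C)) (\<sigma> (h C'))))}"

lemma agree_cnt_eq: "agree_cnt V nbr \<beta> h e = card (crossing_vertices \<beta> h e (=))"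
  by (simp add: agree_cnt_def crossing_vertices_def)

lemma disagree_cnt_eq: "disagree_cnt V nbr \<beta> h e = card (crossing_vertices \<beta> h e (\<noteq>))"
  by (simp add: disagree_cnt_def crossing_vertices_def)

lemma crossing_vertices_cong:
  assumes "\<And>C C' \<sigma>. C \<in> e \<Longrightarrow> C' \<in> e \<Longrightarrow> C \<noteq> C' \<Longrightarrow> valid_orient V nbr \<beta> \<sigma> \<Longrightarrow>
      rel (\<sigma> (h C)) (\<sigma> (h C')) = rel' (\<sigma> (h' C)) (\<sigma> (h' C'))"
  shows "crossing_vertices \<beta> h e rel = crossing_vertices \<beta> h' e rel'"
  unfolding crossing_vertices_def using assms by (intro Collect_cong conj_cong bex_cong refl) auto

lemma disagree_le_agree_after_flip:
  assumes ref: "\<forall>C\<in>circuits V nbr. h C \<in> C"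
    and gf2: "\<forall>e\<in>circuit_edges V nbr. \<forall>C\<in>e. \<forall>C'\<in>e. C \<noteq> C' \<longrightarrow>
                 (X C \<noteq> X C' \<longleftrightarrow> agree_cnt V nbr \<beta> h e < disagree_cnt V nbr \<beta> h e)"
    and flip: "\<forall>C\<in>circuits V nbr. (\<not> X C \<longrightarrow> h' C = h C) \<and>
                 (X C \<longrightarrow> h' C = opp nbr (h C) \<or> h' C = partner (h C))"
    and e: "e \<in> circuit_edges V nbr"
  shows "disagree_cnt V nbr \<beta> h' e \<le> agree_cnt V nbr \<beta> h' e"
proof -
  obtain C C' where e_eq: "e = {C, C'}" "C \<in> circuits V nbr" "C' \<in> circuits V nbr" "C \<noteq> C'"
    using e unfolding circuit_edges_def by blast
  have rel: "(\<sigma> (h' C1) = \<sigma> (h' C2)) = ((\<sigma> (h C1) = \<sigma> (h C2)) = (X C = X C'))"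
    if "C1 \<in> e" "C2 \<in> e" "C1 \<noteq> C2" "valid_orient V nbr \<beta> \<sigma>" for C1 C2 \<sigma>
  proof -
    have C12: "C1 \<in> circuits V nbr" "C2 \<in> circuits V nbr" and "(X C1 = X C2) = (X C = X C')"
      using that(1-3) e_eq by auto
    then show ?thesis
      using flipped_reference[OF ref flip C12(1) that(4)] flipped_reference[OF ref flip C12(2) that(4)]
      by argo
  qed
  show ?thesis
  proof (cases "X C = X C'")
    case True
    have "crossing_vertices \<beta> h' e (=) = crossing_vertices \<beta> h e (=)"
      "crossing_vertices \<beta> h' e (\<noteq>) = crossing_vertices \<beta> h e (\<noteq>)"
      by (rule crossing_vertices_cong, simp add: rel True)+
    moreover have "\<not> agree_cnt V nbr \<beta> h e < disagree_cnt V nbr \<beta> h e"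
      using gf2 e e_eq True by blast
    ultimately show ?thesis by (simp add: agree_cnt_eq disagree_cnt_eq)
  next
    case False
    have "crossing_vertices \<beta> h' e (=) = crossing_vertices \<beta> h e (\<noteq>)"
      "crossing_vertices \<beta> h' e (\<noteq>) = crossing_vertices \<beta> h e (=)"
      by (rule crossing_vertices_cong, simp add: rel False)+
    moreover have "agree_cnt V nbr \<beta> h e < disagree_cnt V nbr \<beta> h e" using gf2 e e_eq False by blast
    ultimately show ?thesis by (simp add: agree_cnt_eq disagree_cnt_eq)
  qed
qed

end

theorem lemma5:
  fixes V :: "'v set" and nbr :: "'v \<Rightarrow> nat \<Rightarrow> 'v" and \<beta> :: real
    and h h' :: "('v \<times> nat) set \<Rightarrow> 'v \<times> nat" and X :: "('v \<times> nat) set \<Rightarrow> bool"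
    and S :: "('v \<times> nat) set set set"
  assumes beta: "\<beta> > 1"
    and graph: "labelled_4reg_graph V nbr"
    and ref: "\<forall>C\<in>circuits V nbr. h C \<in> C"
    and gf2: "\<forall>e\<in>circuit_edges V nbr. \<forall>C\<in>e. \<forall>C'\<in>e. C \<noteq> C' \<longrightarrow>
                 (X C \<noteq> X C' \<longleftrightarrow> agree_cnt V nbr \<beta> h e < disagree_cnt V nbr \<beta> h e)"
    and flip: "\<forall>C\<in>circuits V nbr. (\<not> X C \<longrightarrow> h' C = h C) \<and>
                 (X C \<longrightarrow> h' C = opp nbr (h C) \<or> h' C = partner (h C))"
    and S: "S \<in> Omega_worm (circuits V nbr) (circuit_edges V nbr)"
  shows "pi_worm (circuits V nbr) (circuit_edges V nbr) (edge_x V nbr \<beta> h') S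
           \<ge> 1/2 * (Min (edge_x V nbr \<beta> h' ` circuit_edges V nbr) / 2) ^ card (circuit_edges V nbr)"
proof -
  interpret labelled_graph V nbr by (rule labelled_graph.intro[OF graph])
  obtain v where v: "v \<in> V" using graph unfolding labelled_4reg_graph_def by blast
  then have root: "circuit_of (v, 0) \<in> circuits V nbr" by (simp add: circuits_eq half_edges_def)
  have conn: "\<forall>C\<in>circuits V nbr. (circuit_of (v, 0), C) \<in> (edge_rel (circuit_edges V nbr))\<^sup>*"
    using circuit_graph_connected[OF v] by blast
  have "0 \<le> edge_x V nbr \<beta> h' e \<and> edge_x V nbr \<beta> h' e \<le> 1" if "e \<in> circuit_edges V nbr" for e
    using edge_x_bounds[OF _ disagree_le_agree_after_flip[OF ref gf2 flip that]] beta by simp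
  then show ?thesis
    by (intro pi_worm_lower_bound[OF simple_edges_circuit_edges finite_circuits root conn _ S]) blast
qed

end
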